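(* Consider the controlled SEIR system described in the context, with stage cost weight $\lambda\in(0,1]$. There exists a constant $C\in\mathbb{R}_{\geq 0}$ such that $$J_{\infty}(\mathbf{x}^0,\mathbf{u}_{\mathrm{nom}})\leq C\quad\text{for all }\mathbf{x}^0\in\mathbb{X}_{\mathrm{M}},$$ where $\mathbf{u}_{\mathrm{nom}}\in\mathcal{U}_\infty$ denotes the constant input $\mathbf{u}_{\mathrm{nom}}(t)=(\beta_{\mathrm{nom}},\gamma_{\mathrm{nom}})^\top$ for all $t\ge 0$.
   Context: Parameters: $\eta>0$, $0<\beta_{\min}<\beta_{\mathrm{nom}}$, $0<\gamma_{\mathrm{nom}}<\gamma_{\max}$, $I_{\max}\in(0,1]$. State $\mathbf{x}=(x_1,x_2,x_3)^\top\in\mathbb{R}^3$ (susceptible, exposed, infectious proportions), input $\mathbf{u}=(u_1,u_2)^\top$, dynamics $\dot{\mathbf{x}}=f(\mathbf{x},\mathbf{u})$ with $f(\mathbf{x},\mathbf{u})=(-u_1x_1x_3,\; u_1x_1x_3-\eta x_2,\; \eta x_2-u_2x_3)^\top$. Input constraint set $\mathbb{U}=[\beta_{\min},\beta_{\mathrm{nom}}]\times[\gamma_{\mathrm{nom}},\gamma_{\max}]$; $\mathcal{U}_\infty$ is the set of Lebesgue measurable functions $[0,\infty)\to\mathbb{U}$. State constraint set $\mathbb{X}=\{\mathbf{x}\in[0,1]^3: x_3\le I_{\max},\ x_1+x_2+x_3\le 1\}$. For $\mathbf{x}^0\in[0,1]^3$ with $x_1^0+x_2^0+x_3^0\le1$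 and $\mathbf{u}\in\mathcal{U}_\infty$, $\mathbf{x}(t;\mathbf{x}^0,\mathbf{u})$ denotes the unique absolutely continuous solution (it stays in $[0,1]^3$). Let $\bar x_1=\gamma_{\mathrm{nom}}/\beta_{\mathrm{nom}}$, $\bar x_2=\gamma_{\mathrm{nom}}I_{\max}/\eta$ and $\mathbb{X}_{\mathrm{M}}=\{\mathbf{x}\in\mathbb{X}: x_1\le\bar x_1,\ x_2\le\bar x_2\}$. Stage cost, for fixed $\lambda\in(0,1]$: $\ell(\mathbf{x},\mathbf{u})=\lambda(x_2^2+x_3^2)+(1-\lambda)\|\mathbf{u}-\mathbf{u}_{\mathrm{nom}}\|^2$ with $\mathbf{u}_{\mathrm{nom}}=(\beta_{\mathrm{nom}},\gamma_{\mathrm{nom}})^\top$ and $\|\cdot\|$ the Euclidean norm. Cost functional $J_\infty(\mathbf{x}^0,\mathbf{u})=\int_0^\infty \ell(\mathbf{x}(s;\mathbf{x}^0,\mathbf{u}),\mathbf{u}(s))\,ds$. *)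

theory Defs
  imports "HOL-Analysis.Analysis"
begin

definition seir_f :: "real \<Rightarrow> real^3 \<Rightarrow> real^2 \<Rightarrow> real^3" where
  "seir_f eta x u = vector [- (u$1) * (x$1) * (x$3),
                            (u$1) * (x$1) * (x$3) - eta * (x$2),
                            eta * (x$2) - (u$2) * (x$3)]"

definition u_nom :: "real \<Rightarrow> real \<Rightarrow> real^2" where
  "u_nom beta_nom gamma_nom = vector [beta_nom, gamma_nom]"

definition X_set :: "real \<Rightarrow> (real^3) set" where
  "X_set I_max = {x. (\<forall>i. 0 \<le> x$i \<and> x$i \<le> 1) \<and> x$3 \<le> I_max \<and> x$1 + x$2 + x$3 \<le> 1}"

definition XM_set :: "real \<Rightarrow> real \<Rightarrow> real \<Rightarrow> real \<Rightarrow> (real^3) set" where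
  "XM_set eta beta_nom gamma_nom I_max =
     {x \<in> X_set I_max. x$1 \<le> gamma_nom / beta_nom \<and> x$2 \<le> gamma_nom * I_max / eta}"

definition stage_cost :: "real \<Rightarrow> real \<Rightarrow> real \<Rightarrow> real^3 \<Rightarrow> real^2 \<Rightarrow> real" where
  "stage_cost lam beta_nom gamma_nom x u =
     lam * ((x$2)^2 + (x$3)^2) + (1 - lam) * (norm (u - u_nom beta_nom gamma_nom))^2"

definition seir_solution :: "real \<Rightarrow> (real \<Rightarrow> real^2) \<Rightarrow> real^3 \<Rightarrow> (real \<Rightarrow> real^3) \<Rightarrow> bool" where
  "seir_solution eta u x0 x \<longleftrightarrow> x 0 = x0 \<and>
     (\<forall>t\<ge>0. (x has_vector_derivative seir_f eta (x t) (u t)) (at t within {0..}))"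

definition J_inf :: "real \<Rightarrow> real \<Rightarrow> real \<Rightarrow> (real \<Rightarrow> real^3) \<Rightarrow> (real \<Rightarrow> real^2) \<Rightarrow> ennreal" where
  "J_inf lam beta_nom gamma_nom x u =
     (\<integral>\<^sup>+ s\<in>{0..}. ennreal (stage_cost lam beta_nom gamma_nom (x s) (u s)) \<partial>lborel)"

end

theory Submission
  imports Defs
begin

text \<open>
  Along the nominal input the stage cost is \<open>\<lambda>(E\<^sup>2 + I\<^sup>2)\<close>. Solutions starting in the
  nonnegative orthant stay there: the squared distance \<open>V = \<Sum> min(x\<^sub>i, 0)\<^sup>2\<close> to the orthant
  satisfies \<open>V' \<le> K V\<close> on every bounded time interval, so \<open>V = 0\<close> by Gronwall. Then \<open>S + E + I\<close>
  is nonincreasing (its derivative is \<open>-\<gamma> I\<close>), hence \<open>E, I \<le> 1\<close> and \<open>E\<^sup>2 + I\<^sup>2 \<le> E + I\<close>.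
  Finally \<open>W = (S + E)/\<eta> + (S + E + I)/\<gamma>\<close> is nonnegative with \<open>W' = -(E + I)\<close>, so the cost
  is at most \<open>\<lambda> W(0) \<le> \<lambda>(1/\<eta> + 1/\<gamma>)\<close>.
\<close>

lemma DERIV_atLeast_imp_continuous_on:
  fixes f f' :: "real \<Rightarrow> real"
  assumes "\<And>t. 0 \<le> t \<Longrightarrow> (f has_real_derivative f' t) (at t within {0..})"
  shows "continuous_on {0..} f"
  using assms by (intro continuous_on_vector_derivative)
    (simp add: has_real_derivative_iff_has_vector_derivative)

lemma DERIV_atLeast_nonpos_imp_decreasing:
  fixes f f' :: "real \<Rightarrow> real"
  assumes deriv: "\<And>t. 0 \<le> t \<Longrightarrow> (f has_real_derivative f' t) (at t within {0..})"
    and nonpos: "\<And>t. a < t \<Longrightarrow> t < b \<Longrightarrow> f' t \<le> 0"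
    and "0 \<le> a" "a \<le> b"
  shows "f b \<le> f a"
proof (rule DERIV_nonpos_imp_decreasing_open[OF \<open>a \<le> b\<close>])
  fix t assume t: "a < t" "t < b"
  have "at t within {0..} = at t"
    using t \<open>0 \<le> a\<close> by (intro at_within_interior) auto
  then show "\<exists>y. (f has_real_derivative y) (at t) \<and> y \<le> 0"
    using deriv[of t] nonpos[OF t] t \<open>0 \<le> a\<close> by auto
next
  show "continuous_on {a..b} f"
    using DERIV_atLeast_imp_continuous_on[OF deriv]
    by (rule continuous_on_subset) (use \<open>0 \<le> a\<close> in auto)
qed

lemma DERIV_atLeast_gronwall:
  fixes f f' :: "real \<Rightarrow> real"
  assumes deriv: "\<And>t. 0 \<le> t \<Longrightarrow> (f has_real_derivative f' t) (at t within {0..})"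
    and growth: "\<And>t. 0 < t \<Longrightarrow> t < T \<Longrightarrow> f' t \<le> K * f t"
    and "0 \<le> T"
  shows "f T \<le> f 0 * exp (K * T)"
proof -
  let ?U = "\<lambda>t. f t * exp (- K * t)"
  have "?U T \<le> ?U 0"
  proof (rule DERIV_atLeast_nonpos_imp_decreasing[OF _ _ order_refl \<open>0 \<le> T\<close>])
    show "(?U has_real_derivative (f' t - K * f t) * exp (- K * t)) (at t within {0..})"
      if "0 \<le> t" for t
      using deriv[OF that] by (auto intro!: derivative_eq_intros simp: algebra_simps)
    show "(f' t - K * f t) * exp (- K * t) \<le> 0" if "0 < t" "t < T" for t
      using growth[OF that] by (simp add: mult_nonpos_nonneg)
  qed
  then show ?thesis
    by (simp add: exp_minus field_simps)
qed

lemma nn_integral_atLeast_le_if_DERIV: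
  fixes h W :: "real \<Rightarrow> real"
  assumes W_deriv: "\<And>t. 0 \<le> t \<Longrightarrow> (W has_real_derivative - h t) (at t within {0..})"
    and h_cont: "continuous_on {0..} h"
    and h_nonneg: "\<And>t. 0 \<le> t \<Longrightarrow> 0 \<le> h t"
    and W_nonneg: "\<And>t. 0 \<le> t \<Longrightarrow> 0 \<le> W t"
  shows "(\<integral>\<^sup>+ s\<in>{0..}. ennreal (h s) \<partial>lborel) \<le> ennreal (W 0)"
proof -
  define f where "f n s = ennreal (h s) * indicator {0..real n} s" for n :: nat and s
  have "(h has_integral W 0 - W n) {0..n}" if "0 \<le> n" for n
  proof -
    have "((\<lambda>t. - W t) has_vector_derivative h t) (at t within {0..n})" if "t \<in> {0..n}" for t
      using DERIV_minus[OF W_deriv[of t]] that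
      by (auto simp: has_real_derivative_iff_has_vector_derivative
          intro: has_vector_derivative_within_subset)
    from fundamental_theorem_of_calculus[OF \<open>0 \<le> n\<close> this] show ?thesis
      by simp
  qed
  then have partial: "integral\<^sup>N lborel (f n) = ennreal (W 0 - W n)" for n
    unfolding f_def using h_nonneg by (intro nn_integral_has_integral_lebesgue') auto
  have "incseq f"
    by (intro incseq_SucI le_funI) (auto simp: f_def indicator_def)
  moreover have "f n \<in> borel_measurable lborel" for n
  proof -
    have "(\<lambda>s. indicator {0..real n} s *\<^sub>R h s) \<in> borel_measurable borel"
      using continuous_on_subset[OF h_cont]
      by (intro borel_measurable_continuous_on_indicator) auto
    moreover have "f n = (\<lambda>s. ennreal (indicator {0..real n} s *\<^sub>R h s))"
      by (auto simp: f_def indicator_def)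
    ultimately show ?thesis
      by (simp add: measurable_lborel2)
  qed
  moreover have "(SUP n. f n s) = ennreal (h s) * indicator {0..} s" for s
  proof (rule antisym)
    show "(SUP n. f n s) \<le> ennreal (h s) * indicator {0..} s"
      by (rule SUP_least) (auto simp: f_def indicator_def)
    have "s \<le> real (nat \<lceil>s\<rceil>)"
      by (rule real_nat_ceiling_ge)
    then have "ennreal (h s) * indicator {0..} s \<le> f (nat \<lceil>s\<rceil>) s"
      by (auto simp: f_def indicator_def)
    also have "\<dots> \<le> (SUP n. f n s)"
      by (rule SUP_upper) simp
    finally show "ennreal (h s) * indicator {0..} s \<le> (SUP n. f n s)" .
  qed
  ultimately have "(\<integral>\<^sup>+ s\<in>{0..}. ennreal (h s) \<partial>lborel) = (SUP n. integral\<^sup>N lborel (f n))"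
    using nn_integral_monotone_convergence_SUP[of f lborel] by simp
  also have "\<dots> \<le> ennreal (W 0)"
    unfolding partial using W_nonneg by (intro SUP_least ennreal_leI) auto
  finally show ?thesis .
qed

lemma DERIV_min_0_power2: "((\<lambda>y. (min y 0)\<^sup>2) has_real_derivative 2 * min y 0) (at y)"
proof -
  have "((\<lambda>y. if y \<in> {..0} then y\<^sup>2 else 0) has_derivative
      (if y \<in> {..0} then (\<lambda>h. 2 * y * h) else (\<lambda>h. 0))) (at y within ({..0} \<union> {0..}))"
    by (rule has_derivative_If_within_closures) (auto intro!: derivative_eq_intros)
  moreover have "(\<lambda>y. if y \<in> {..0} then y\<^sup>2 else 0) = (\<lambda>y::real. (min y 0)\<^sup>2)"
    by (auto simp: min_def)
  moreover have "(if y \<in> {..0} then (\<lambda>h. 2 * y * h) else (\<lambda>h. 0)) = (*) (2 * min y 0)"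
    by (auto simp: min_def)
  moreover have "{..0} \<union> {0..} = (UNIV :: real set)" by auto
  ultimately show ?thesis
    by (simp add: has_field_derivative_def mult.commute)
qed

lemma min_0_mult_self: "min x 0 * x = (min x 0)\<^sup>2" for x :: real
  by (simp add: min_def power2_eq_square)

lemma min_0_mult_le: "min x 0 * y \<le> min x 0 * min y 0" for x y :: real
  by (rule mult_left_mono_neg) auto

lemma two_mult_mult_le: "2 * x * y * z \<le> \<bar>z\<bar> * (x\<^sup>2 + y\<^sup>2)" for x y z :: real
proof -
  have "2 * x * y * z \<le> \<bar>z\<bar> * (2 * \<bar>x\<bar> * \<bar>y\<bar>)"
    using abs_ge_self[of "2 * x * y * z"] by (simp add: abs_mult mult_ac)
  also have "\<dots> \<le> \<bar>z\<bar> * (x\<^sup>2 + y\<^sup>2)"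
    using sum_squares_bound[of "\<bar>x\<bar>" "\<bar>y\<bar>"] by (intro mult_left_mono) auto
  finally show ?thesis .
qed

lemma min_0_mult_product_le:
  fixes x y z M :: real
  assumes "\<bar>y\<bar> \<le> M" "\<bar>z\<bar> \<le> M"
  shows "2 * min x 0 * (y * z) \<le> M * ((min x 0)\<^sup>2 + (min y 0)\<^sup>2 + (min z 0)\<^sup>2)"
proof -
  let ?V = "(min x 0)\<^sup>2 + (min y 0)\<^sup>2 + (min z 0)\<^sup>2"
  consider "y < 0" | "z < 0" | "0 \<le> y" "0 \<le> z" by linarith
  then show ?thesis
  proof cases
    case 1
    then have "2 * min x 0 * (y * z) \<le> \<bar>z\<bar> * ((min x 0)\<^sup>2 + (min y 0)\<^sup>2)"
      using two_mult_mult_le[of "min x 0" y z] by (simp add: mult.assoc)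
    also have "\<dots> \<le> M * ?V"
      using assms by (intro mult_mono) auto
    finally show ?thesis .
  next
    case 2
    then have "2 * min x 0 * (y * z) \<le> \<bar>y\<bar> * ((min x 0)\<^sup>2 + (min z 0)\<^sup>2)"
      using two_mult_mult_le[of "min x 0" z y] by (simp add: mult_ac)
    also have "\<dots> \<le> M * ?V"
      using assms by (intro mult_mono) auto
    finally show ?thesis .
  next
    case 3
    then have "min x 0 * (y * z) \<le> 0"
      by (intro mult_nonpos_nonneg) auto
    moreover have "0 \<le> M * ?V"
      using assms by simp
    ultimately show ?thesis by linarith
  qed
qed

lemma seir_field_min_0_estimate:
  fixes S E I b e g M :: real
  assumes "0 \<le> b" "0 \<le> e" "0 \<le> g" "\<bar>S\<bar> \<le> M" "\<bar>I\<bar> \<le> M"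
  shows "2 * min S 0 * (- b * S * I) + 2 * min E 0 * (b * S * I - e * E)
           + 2 * min I 0 * (e * E - g * I)
         \<le> (3 * b * M + e) * ((min S 0)\<^sup>2 + (min E 0)\<^sup>2 + (min I 0)\<^sup>2)"
proof -
  let ?V = "(min S 0)\<^sup>2 + (min E 0)\<^sup>2 + (min I 0)\<^sup>2"
  have squares: "2 * min S 0 * (- b * S * I) = - 2 * b * I * (min S 0)\<^sup>2"
    "2 * min E 0 * (- e * E) = - 2 * e * (min E 0)\<^sup>2"
    "2 * min I 0 * (- g * I) = - 2 * g * (min I 0)\<^sup>2"
    by (simp_all add: algebra_simps flip: min_0_mult_self)
  have "(2 * b * - I) * (min S 0)\<^sup>2 \<le> (2 * b * M) * ?V"
    using assms by (intro mult_mono mult_left_mono) auto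
  then have infection_S: "- 2 * b * I * (min S 0)\<^sup>2 \<le> 2 * b * M * ?V"
    by (simp only: mult_minus_right mult_minus_left)
  have infection_E: "2 * min E 0 * (b * S * I) \<le> b * M * ?V"
    using mult_left_mono[OF min_0_mult_product_le[OF assms(4,5), of E] assms(1)]
    by (simp add: ac_simps)
  have "2 * min I 0 * E \<le> 2 * min I 0 * min E 0"
    using min_0_mult_le[of I E] by simp
  also have "\<dots> \<le> ?V"
    using sum_squares_bound[of "min I 0" "min E 0"] zero_le_power2[of "min S 0"] by linarith
  finally have "e * (2 * min I 0 * E) \<le> e * ?V"
    using assms(2) by (rule mult_left_mono)
  then have inflow_I: "2 * min I 0 * (e * E) \<le> e * ?V"
    by (simp add: mult_ac)
  have "2 * min S 0 * (- b * S * I) + 2 * min E 0 * (b * S * I - e * E)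
           + 2 * min I 0 * (e * E - g * I)
      = 2 * min S 0 * (- b * S * I) + 2 * min E 0 * (b * S * I) + 2 * min E 0 * (- e * E)
           + 2 * min I 0 * (e * E) + 2 * min I 0 * (- g * I)"
    by (simp add: algebra_simps)
  moreover have "(3 * b * M + e) * ?V = 2 * b * M * ?V + b * M * ?V + e * ?V"
    by (simp add: algebra_simps)
  moreover have "0 \<le> e * (min E 0)\<^sup>2" "0 \<le> g * (min I 0)\<^sup>2"
    using assms by simp_all
  ultimately show ?thesis
    using squares infection_S infection_E inflow_I by linarith
qed

locale seir_trajectory =
  fixes b e g :: real and S E I :: "real \<Rightarrow> real"
  assumes b_nonneg: "0 \<le> b" and e_pos: "0 < e" and g_pos: "0 < g"
    and S_deriv: "\<And>t. 0 \<le> t \<Longrightarrow> (S has_real_derivative - b * S t * I t) (at t within {0..})"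
    and E_deriv: "\<And>t. 0 \<le> t \<Longrightarrow> (E has_real_derivative b * S t * I t - e * E t) (at t within {0..})"
    and I_deriv: "\<And>t. 0 \<le> t \<Longrightarrow> (I has_real_derivative e * E t - g * I t) (at t within {0..})"
begin

lemma S_I_bounded_on:
  obtains M where "\<And>t. t \<in> {0..T} \<Longrightarrow> \<bar>S t\<bar> \<le> M \<and> \<bar>I t\<bar> \<le> M"
proof -
  have "continuous_on {0..T} (\<lambda>t. max \<bar>S t\<bar> \<bar>I t\<bar>)"
    using DERIV_atLeast_imp_continuous_on[OF S_deriv] DERIV_atLeast_imp_continuous_on[OF I_deriv]
    by (intro continuous_intros) (auto intro: continuous_on_subset)
  then have "bounded ((\<lambda>t. max \<bar>S t\<bar> \<bar>I t\<bar>) ` {0..T})"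
    by (intro compact_imp_bounded compact_continuous_image) auto
  then obtain M where "\<And>t. t \<in> {0..T} \<Longrightarrow> \<bar>max \<bar>S t\<bar> \<bar>I t\<bar>\<bar> \<le> M"
    unfolding bounded_real by blast
  then show ?thesis
    using that by fastforce
qed

lemma nonneg:
  assumes "0 \<le> S 0" "0 \<le> E 0" "0 \<le> I 0" and "0 \<le> T"
  shows "0 \<le> S T \<and> 0 \<le> E T \<and> 0 \<le> I T"
proof -
  obtain M where M: "\<And>t. t \<in> {0..T} \<Longrightarrow> \<bar>S t\<bar> \<le> M \<and> \<bar>I t\<bar> \<le> M"
    using S_I_bounded_on by blast
  define V where "V t = (min (S t) 0)\<^sup>2 + (min (E t) 0)\<^sup>2 + (min (I t) 0)\<^sup>2" for t
  define V' where "V' t = 2 * min (S t) 0 * (- b * S t * I t)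
    + 2 * min (E t) 0 * (b * S t * I t - e * E t) + 2 * min (I t) 0 * (e * E t - g * I t)" for t
  have "V T \<le> V 0 * exp ((3 * b * M + e) * T)"
  proof (rule DERIV_atLeast_gronwall[OF _ _ \<open>0 \<le> T\<close>])
    show "(V has_real_derivative V' t) (at t within {0..})" if "0 \<le> t" for t
      unfolding V_def[abs_def] V'_def
      using DERIV_chain2[OF DERIV_min_0_power2 S_deriv[OF that]]
        DERIV_chain2[OF DERIV_min_0_power2 E_deriv[OF that]]
        DERIV_chain2[OF DERIV_min_0_power2 I_deriv[OF that]]
      by (intro DERIV_add)
    show "V' t \<le> (3 * b * M + e) * V t" if "0 < t" "t < T" for t
      unfolding V_def V'_def
      using seir_field_min_0_estimate b_nonneg e_pos g_pos M that by simp
  qed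
  moreover have "V 0 = 0"
    using assms unfolding V_def by simp
  ultimately have "V T \<le> 0"
    by simp
  then have "(min (S T) 0)\<^sup>2 = 0 \<and> (min (E T) 0)\<^sup>2 = 0 \<and> (min (I T) 0)\<^sup>2 = 0"
    unfolding V_def using zero_le_power2[of "min (S T) 0"] zero_le_power2[of "min (E T) 0"]
      zero_le_power2[of "min (I T) 0"] by linarith
  then show ?thesis
    by (simp add: min_def split: if_splits)
qed

lemma total_population_le_initial:
  assumes "0 \<le> S 0" "0 \<le> E 0" "0 \<le> I 0" and "0 \<le> t"
  shows "S t + E t + I t \<le> S 0 + E 0 + I 0"
proof (rule DERIV_atLeast_nonpos_imp_decreasing[OF _ _ order_refl \<open>0 \<le> t\<close>])
  show "((\<lambda>t. S t + E t + I t) has_real_derivative - g * I t) (at t within {0..})"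
    if "0 \<le> t" for t
    using DERIV_add[OF DERIV_add[OF S_deriv E_deriv] I_deriv, OF that that that]
    by (simp add: algebra_simps)
  show "- g * I t \<le> 0" if "0 < t" for t
    using nonneg[OF assms(1-3), of t] g_pos that by simp
qed

lemma nn_integral_E_I_squares_le:
  assumes "0 \<le> c" and "0 \<le> S 0" "0 \<le> E 0" "0 \<le> I 0" "S 0 + E 0 + I 0 \<le> 1"
  shows "(\<integral>\<^sup>+ s\<in>{0..}. ennreal (c * ((E s)\<^sup>2 + (I s)\<^sup>2)) \<partial>lborel)
    \<le> ennreal (c * (1 / e + 1 / g))"
proof -
  define W where "W t = c * ((S t + E t) / e + (S t + E t + I t) / g)" for t
  have state_nonneg: "0 \<le> S t \<and> 0 \<le> E t \<and> 0 \<le> I t" if "0 \<le> t" for t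
    using nonneg[OF assms(2-4) that] .
  have "(\<integral>\<^sup>+ s\<in>{0..}. ennreal (c * ((E s)\<^sup>2 + (I s)\<^sup>2)) \<partial>lborel)
      \<le> (\<integral>\<^sup>+ s\<in>{0..}. ennreal (c * (E s + I s)) \<partial>lborel)"
  proof (intro nn_integral_mono)
    fix s
    show "ennreal (c * ((E s)\<^sup>2 + (I s)\<^sup>2)) * indicator {0..} s
      \<le> ennreal (c * (E s + I s)) * indicator {0..} s"
    proof (cases "0 \<le> s")
      case True
      then have "E s \<le> 1" "I s \<le> 1"
        using state_nonneg[OF True] total_population_le_initial[OF assms(2-4) True] assms(5) by auto
      then have "(E s)\<^sup>2 + (I s)\<^sup>2 \<le> E s + I s"
        using state_nonneg[OF True] by (intro add_mono) (auto simp: power2_eq_square mult_left_le)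
      then show ?thesis
        using assms(1) by (intro mult_right_mono ennreal_leI mult_left_mono) auto
    qed simp
  qed
  also have "\<dots> \<le> ennreal (W 0)"
  proof (rule nn_integral_atLeast_le_if_DERIV)
    show "(W has_real_derivative - (c * (E t + I t))) (at t within {0..})" if "0 \<le> t" for t
      unfolding W_def[abs_def]
      using e_pos g_pos
      by (auto intro!: derivative_eq_intros S_deriv E_deriv I_deriv that simp: field_simps)
    show "continuous_on {0..} (\<lambda>t. c * (E t + I t))"
      using DERIV_atLeast_imp_continuous_on[OF E_deriv] DERIV_atLeast_imp_continuous_on[OF I_deriv]
      by (intro continuous_intros)
  qed (use state_nonneg assms(1) e_pos g_pos in \<open>auto simp: W_def\<close>)
  also have "\<dots> \<le> ennreal (c * (1 / e + 1 / g))"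
    using assms e_pos g_pos unfolding W_def
    by (intro ennreal_leI mult_left_mono add_mono divide_right_mono) auto
  finally show ?thesis .
qed

end

lemma seir_trajectory_if_seir_solution:
  assumes "seir_solution eta (\<lambda>_. u_nom beta gamma) x0 x"
    and "0 \<le> beta" "0 < eta" "0 < gamma"
  shows "seir_trajectory beta eta gamma (\<lambda>t. x t $ 1) (\<lambda>t. x t $ 2) (\<lambda>t. x t $ 3)"
proof -
  have deriv: "((\<lambda>t. x t $ i) has_real_derivative seir_f eta (x t) (u_nom beta gamma) $ i)
    (at t within {0..})"
    if "0 \<le> t" for t i
  proof -
    have "(x has_vector_derivative seir_f eta (x t) (u_nom beta gamma)) (at t within {0..})"
      using assms(1) that by (simp add: seir_solution_def)
    from bounded_linear.has_vector_derivative[OF bounded_linear_vec_nth this] show ?thesis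
      by (simp add: has_real_derivative_iff_has_vector_derivative)
  qed
  show ?thesis
    using assms(2-4) deriv[of _ 1] deriv[of _ 2] deriv[of _ 3]
    by unfold_locales (simp_all add: seir_f_def u_nom_def)
qed

theorem lemma2:
  fixes eta beta_min beta_nom gamma_nom gamma_max I_max lam :: real
  assumes "eta > 0" and "0 < beta_min" and "beta_min < beta_nom"
    and "0 < gamma_nom" and "gamma_nom < gamma_max"
    and "0 < I_max" and "I_max \<le> 1"
    and "0 < lam" and "lam \<le> 1"
  shows "\<exists>C::real. C \<ge> 0 \<and>
    (\<forall>x0 \<in> XM_set eta beta_nom gamma_nom I_max. \<forall>x.
       seir_solution eta (\<lambda>_. u_nom beta_nom gamma_nom) x0 x \<longrightarrow>
       J_inf lam beta_nom gamma_nom x (\<lambda>_. u_nom beta_nom gamma_nom) \<le> ennreal C)"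
proof (intro exI conjI ballI allI impI)
  show "0 \<le> lam * (1 / eta + 1 / gamma_nom)"
    using assms by simp
  fix x0 x
  assume x0: "x0 \<in> XM_set eta beta_nom gamma_nom I_max"
    and sol: "seir_solution eta (\<lambda>_. u_nom beta_nom gamma_nom) x0 x"
  interpret seir_trajectory beta_nom eta gamma_nom "\<lambda>t. x t $ 1" "\<lambda>t. x t $ 2" "\<lambda>t. x t $ 3"
    using seir_trajectory_if_seir_solution[OF sol] assms by simp
  have "x 0 = x0"
    using sol by (simp add: seir_solution_def)
  then have "0 \<le> x 0 $ 1" "0 \<le> x 0 $ 2" "0 \<le> x 0 $ 3" "x 0 $ 1 + x 0 $ 2 + x 0 $ 3 \<le> 1"
    using x0 by (auto simp: XM_set_def X_set_def)
  from nn_integral_E_I_squares_le[OF _ this] assms(8)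
  show "J_inf lam beta_nom gamma_nom x (\<lambda>_. u_nom beta_nom gamma_nom)
    \<le> ennreal (lam * (1 / eta + 1 / gamma_nom))"
    by (simp add: J_inf_def stage_cost_def)
qed

end
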